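(* Let $\Sigma\supseteq\Sigma_m$ be a signature and $E\supseteq\mathrm{Md}$ a set of $\Sigma$-equations such that $(\Sigma,E)$ has the propagation property for pseudo units and the propagation property for pseudo zeros. Then for all closed $\Sigma$-terms $t,r,s$: (i) if $E\cup\{t=0\}\vdash_{\mathrm{IR}} r=s$ then $E\vdash 0_t\cdot r=0_t\cdot s$; (ii) if $E\cup\{1_t=1\}\vdash_{\mathrm{IR}} r=s$ then $E\vdash 1_t\cdot r=1_t\cdot s$.
   Context: $\Sigma_m=(0,1,+,\cdot,-,{}^{-1})$; $\mathrm{Md}$ is the set of equations $(x+y)+z=x+(y+z)$, $x+y=y+x$, $x+0=x$, $x+(-x)=0$, $(x\cdot y)\cdot z=x\cdot(y\cdot z)$, $x\cdot y=y\cdot x$, $1\cdot x=x$, $x\cdot(y+z)=x\cdot y+x\cdot z$, $(x^{-1})^{-1}=x$, $x\cdot(x\cdot x^{-1})=x$. $1_t$ abbreviates $t\cdot t^{-1}$, $0_t$ abbreviates $1+(-1_t)$. $\vdash$ denotes derivability in equational logic. $(\Sigma,E)$ has the propagation property for pseudo units if for all $\Sigma$-terms $t,r$ and every context $C[\,]$, $E\vdash 1_t\cdot C[r]=1_t\cdot C[1_t\cdot r]$; it has the propagation property for pseudo zeros if for all $\Sigma$-terms $t,r$ and every context $C[\,]$, $E\vdash 0_t\cdot C[r]=0_t\cdot C[0_t\cdot r]$. The inverse rule IR is: from $F\cup\{h=0\}\vdash r=s$ and $F\cup\{1_h=1\}\vdash r=s$ infer $F\vdash r=s$, with $h$ ranging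 over closed $\Sigma$-terms. $F\vdash_{\mathrm{IR}} r=s$ means $r=s$ is derivable from $F$ in equational logic extended with finitely many applications of IR. *)

theory Defs
  imports Main
begin

text \<open>Function symbols: the meadow symbols of Sigma_m plus extra symbols of type 'f.
  A signature Sigma containing Sigma_m is given by a set F of extra symbols and an
  arity function ar.\<close>

datatype 'f sym = SZero | SOne | SPlus | STimes | SNeg | SInv | SExt 'f

datatype 'f trm = Var nat | Fun "'f sym" "'f trm list"

fun arity_ok :: "'f set \<Rightarrow> ('f \<Rightarrow> nat) \<Rightarrow> 'f sym \<Rightarrow> nat \<Rightarrow> bool" where
  "arity_ok F ar SZero n = (n = 0)"
| "arity_ok F ar SOne n = (n = 0)"
| "arity_ok F ar SPlus n = (n = 2)"
| "arity_ok F ar STimes n = (n = 2)"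
| "arity_ok F ar SNeg n = (n = 1)"
| "arity_ok F ar SInv n = (n = 1)"
| "arity_ok F ar (SExt f) n = (f \<in> F \<and> ar f = n)"

fun wf_trm :: "'f set \<Rightarrow> ('f \<Rightarrow> nat) \<Rightarrow> 'f trm \<Rightarrow> bool" where
  "wf_trm F ar (Var x) = True"
| "wf_trm F ar (Fun s ts) = (arity_ok F ar s (length ts) \<and> (\<forall>t\<in>set ts. wf_trm F ar t))"

fun vars_trm :: "'f trm \<Rightarrow> nat set" where
  "vars_trm (Var x) = {x}"
| "vars_trm (Fun s ts) = (\<Union>t\<in>set ts. vars_trm t)"

definition closed_trm :: "'f trm \<Rightarrow> bool" where
  "closed_trm t \<longleftrightarrow> vars_trm t = {}"

fun subst :: "(nat \<Rightarrow> 'f trm) \<Rightarrow> 'f trm \<Rightarrow> 'f trm" where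
  "subst \<sigma> (Var x) = \<sigma> x"
| "subst \<sigma> (Fun s ts) = Fun s (map (subst \<sigma>) ts)"

datatype 'f ctxt = Hole | CFun "'f sym" "'f trm list" "'f ctxt" "'f trm list"

fun fill :: "'f ctxt \<Rightarrow> 'f trm \<Rightarrow> 'f trm" where
  "fill Hole u = u"
| "fill (CFun s l C r) u = Fun s (l @ fill C u # r)"

fun wf_ctxt :: "'f set \<Rightarrow> ('f \<Rightarrow> nat) \<Rightarrow> 'f ctxt \<Rightarrow> bool" where
  "wf_ctxt F ar Hole = True"
| "wf_ctxt F ar (CFun s l C r) =
     (arity_ok F ar s (length l + 1 + length r) \<and> (\<forall>t\<in>set l. wf_trm F ar t)
      \<and> wf_ctxt F ar C \<and> (\<forall>t\<in>set r. wf_trm F ar t))"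

definition mZero :: "'f trm" where "mZero = Fun SZero []"
definition mOne :: "'f trm" where "mOne = Fun SOne []"
definition mPlus :: "'f trm \<Rightarrow> 'f trm \<Rightarrow> 'f trm" where "mPlus a b = Fun SPlus [a, b]"
definition mTimes :: "'f trm \<Rightarrow> 'f trm \<Rightarrow> 'f trm" where "mTimes a b = Fun STimes [a, b]"
definition mNeg :: "'f trm \<Rightarrow> 'f trm" where "mNeg a = Fun SNeg [a]"
definition mInv :: "'f trm \<Rightarrow> 'f trm" where "mInv a = Fun SInv [a]"

text \<open>pseudo unit 1_t = t * t^-1 and pseudo zero 0_t = 1 + (-1_t)\<close>
definition one_of :: "'f trm \<Rightarrow> 'f trm" where "one_of t = mTimes t (mInv t)"
definition zero_of :: "'f trm \<Rightarrow> 'f trm" where "zero_of t = mPlus mOne (mNeg (one_of t))"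

text \<open>The axioms Md (variables x, y, z are Var 0, Var 1, Var 2)\<close>
definition Md :: "('f trm \<times> 'f trm) set" where
  "Md = (let x = Var 0; y = Var 1; z = Var 2 in
    { (mPlus (mPlus x y) z, mPlus x (mPlus y z)),
      (mPlus x y, mPlus y x),
      (mPlus x mZero, x),
      (mPlus x (mNeg x), mZero),
      (mTimes (mTimes x y) z, mTimes x (mTimes y z)),
      (mTimes x y, mTimes y x),
      (mTimes mOne x, x),
      (mTimes x (mPlus y z), mPlus (mTimes x y) (mTimes x z)),
      (mInv (mInv x), x),
      (mTimes x (mTimes x (mInv x)), x) })"

inductive eqderiv :: "'f set \<Rightarrow> ('f \<Rightarrow> nat) \<Rightarrow> ('f trm \<times> 'f trm) set \<Rightarrow> 'f trm \<Rightarrow> 'f trm \<Rightarrow> bool"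
  for F ar E where
  ax: "(l, r) \<in> E \<Longrightarrow> (\<forall>x. wf_trm F ar (\<sigma> x)) \<Longrightarrow> eqderiv F ar E (subst \<sigma> l) (subst \<sigma> r)"
| refl: "wf_trm F ar t \<Longrightarrow> eqderiv F ar E t t"
| sym: "eqderiv F ar E t u \<Longrightarrow> eqderiv F ar E u t"
| trans: "eqderiv F ar E t u \<Longrightarrow> eqderiv F ar E u v \<Longrightarrow> eqderiv F ar E t v"
| cong: "arity_ok F ar s (length ts) \<Longrightarrow> list_all2 (eqderiv F ar E) ts us
         \<Longrightarrow> eqderiv F ar E (Fun s ts) (Fun s us)"

text \<open>Equational logic extended with the inverse rule IR (finitely many applications,
  since the predicate is inductive); the equation set varies in IR.\<close>
inductive irderiv :: "'f set \<Rightarrow> ('f \<Rightarrow> nat) \<Rightarrow> ('f trm \<times> 'f trm) set \<Rightarrow> 'f trm \<Rightarrow> 'f trm \<Rightarrow> bool"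
  for F ar where
  ax: "(l, r) \<in> E \<Longrightarrow> (\<forall>x. wf_trm F ar (\<sigma> x)) \<Longrightarrow> irderiv F ar E (subst \<sigma> l) (subst \<sigma> r)"
| refl: "wf_trm F ar t \<Longrightarrow> irderiv F ar E t t"
| sym: "irderiv F ar E t u \<Longrightarrow> irderiv F ar E u t"
| trans: "irderiv F ar E t u \<Longrightarrow> irderiv F ar E u v \<Longrightarrow> irderiv F ar E t v"
| cong: "arity_ok F ar s (length ts) \<Longrightarrow> list_all2 (irderiv F ar E) ts us
         \<Longrightarrow> irderiv F ar E (Fun s ts) (Fun s us)"
| IR: "wf_trm F ar h \<Longrightarrow> closed_trm h
       \<Longrightarrow> irderiv F ar (insert (h, mZero) E) r s
       \<Longrightarrow> irderiv F ar (insert (one_of h, mOne) E) r s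
       \<Longrightarrow> irderiv F ar E r s"

definition prop_units :: "'f set \<Rightarrow> ('f \<Rightarrow> nat) \<Rightarrow> ('f trm \<times> 'f trm) set \<Rightarrow> bool" where
  "prop_units F ar E \<longleftrightarrow>
    (\<forall>t r C. wf_trm F ar t \<longrightarrow> wf_trm F ar r \<longrightarrow> wf_ctxt F ar C \<longrightarrow>
       eqderiv F ar E (mTimes (one_of t) (fill C r)) (mTimes (one_of t) (fill C (mTimes (one_of t) r))))"

definition prop_zeros :: "'f set \<Rightarrow> ('f \<Rightarrow> nat) \<Rightarrow> ('f trm \<times> 'f trm) set \<Rightarrow> bool" where
  "prop_zeros F ar E \<longleftrightarrow>
    (\<forall>t r C. wf_trm F ar t \<longrightarrow> wf_trm F ar r \<longrightarrow> wf_ctxt F ar C \<longrightarrow>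
       eqderiv F ar E (mTimes (zero_of t) (fill C r)) (mTimes (zero_of t) (fill C (mTimes (zero_of t) r))))"

end

theory Submission
  imports Defs
begin

(* Call a closed term c a propagating multiplier if
     E |- c * C[x] = c * C[c * x]   for every context C and term x.
   Then "E |- c * a = c * b" is a congruence: it is preserved by every
   function symbol, one argument at a time.  Call an extension E' of E
   guarded by c if every equation of E' is either in E, or closed and valid
   in E after multiplication by c.  By induction on IR-derivations, if E' is
   guarded by c then E' |-_IR a = b implies E |- c * a = c * b.  For the step
   of the inverse rule IR with closed h, the extensions E' + {h = 0} and
   E' + {1_h = 1} are guarded by c * 0_h and c * 1_h respectively (here the
   propagation properties are used to make these products propagating), and
   c * a = c * 0_h * a + c * 1_h * a because 0_h + 1_h = 1.
   The theorem is the instance c = 0_t, E' = E + {t = 0} (resp. c = 1_t,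
   E' = E + {1_t = 1}), using 0_t * t = 0_t * 0 and 1_t * 1_t = 1_t * 1.
   The file first collects syntactic facts, then the meadow identities
   derivable from Md, then the theory of propagating multipliers and guarded
   extensions, and finally the soundness induction and the theorem. *)

lemma wf_meadow_simps[simp]:
  "wf_trm F ar mZero" "wf_trm F ar mOne"
  "wf_trm F ar (mPlus a b) = (wf_trm F ar a \<and> wf_trm F ar b)"
  "wf_trm F ar (mTimes a b) = (wf_trm F ar a \<and> wf_trm F ar b)"
  "wf_trm F ar (mNeg a) = wf_trm F ar a"
  "wf_trm F ar (mInv a) = wf_trm F ar a"
  "wf_trm F ar (one_of a) = wf_trm F ar a"
  "wf_trm F ar (zero_of a) = wf_trm F ar a"
  by (auto simp: mZero_def mOne_def mPlus_def mTimes_def mNeg_def mInv_def one_of_def zero_of_def)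

lemma closed_meadow_simps[simp]:
  "closed_trm mZero" "closed_trm mOne"
  "closed_trm (one_of a) = closed_trm a"
  by (auto simp: closed_trm_def mZero_def mOne_def mTimes_def mInv_def one_of_def)

text \<open>Closed terms are fixed by every substitution; this is what lets the
  closed extra equations of an extension be used as axioms.\<close>
lemma subst_closed: "closed_trm t \<Longrightarrow> subst \<sigma> t = t"
  unfolding closed_trm_def by (induction t) (auto intro!: map_idI)

lemma wf_subst: "(\<forall>x. wf_trm F ar (\<sigma> x)) \<Longrightarrow> wf_trm F ar l \<Longrightarrow> wf_trm F ar (subst \<sigma> l)"
  by (induction l) auto

lemma wf_fill: "wf_ctxt F ar C \<Longrightarrow> wf_trm F ar x \<Longrightarrow> wf_trm F ar (fill C x)"
  by (induction C) auto

definition inst3 :: "'f trm \<Rightarrow> 'f trm \<Rightarrow> 'f trm \<Rightarrow> nat \<Rightarrow> 'f trm" where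
  "inst3 a b d = (\<lambda>n. if n = 0 then a else if n = 1 then b else if n = 2 then d else mZero)"

declare eqderiv.trans[trans]

locale meadow_theory =
  fixes F :: "'f set" and ar :: "'f \<Rightarrow> nat" and E :: "('f trm \<times> 'f trm) set"
  assumes E_wf: "\<forall>(l, u) \<in> E. wf_trm F ar l \<and> wf_trm F ar u"
    and Md_sub: "Md \<subseteq> E"
begin

abbreviation EQ where "EQ \<equiv> eqderiv F ar E"
abbreviation wf where "wf \<equiv> wf_trm F ar"

lemmas sy = eqderiv.sym

lemma eqderiv_wf: "EQ a b \<Longrightarrow> wf a \<and> wf b"
proof (induction rule: eqderiv.induct)
  case (ax l r \<sigma>)
  then show ?case using E_wf wf_subst[of F ar \<sigma>] by blast
next
  case (cong s ts us)
  have "length ts = length us" using cong(2) by (rule list_all2_lengthD)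
  moreover have "\<forall>u\<in>set us. wf u" "\<forall>u\<in>set ts. wf u"
    using cong(2) by (auto simp: list_all2_conv_all_nth in_set_conv_nth)
  ultimately show ?case using cong(1) by simp
qed simp_all

lemma rfl: "wf a \<Longrightarrow> EQ a a" by (rule eqderiv.refl)

lemma times_cong: "EQ a a' \<Longrightarrow> EQ b b' \<Longrightarrow> EQ (mTimes a b) (mTimes a' b')"
  unfolding mTimes_def by (rule eqderiv.cong) auto
lemma plus_cong: "EQ a a' \<Longrightarrow> EQ b b' \<Longrightarrow> EQ (mPlus a b) (mPlus a' b')"
  unfolding mPlus_def by (rule eqderiv.cong) auto
lemma neg_cong: "EQ a a' \<Longrightarrow> EQ (mNeg a) (mNeg a')"
  unfolding mNeg_def by (rule eqderiv.cong) auto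

lemma ctx_cong: "EQ x y \<Longrightarrow> wf_ctxt F ar C \<Longrightarrow> EQ (fill C x) (fill C y)"
proof (induction C)
  case (CFun s l C r)
  have "list_all2 EQ l l" "list_all2 EQ r r"
    by (rule list.rel_refl_strong; use CFun in \<open>auto intro: rfl\<close>)+
  then have "list_all2 EQ (l @ fill C x # r) (l @ fill C y # r)"
    using CFun by (auto intro!: list_all2_appendI)
  then show ?case using CFun by (auto intro!: eqderiv.cong)
qed simp

lemma Md_instance: "(l, r) \<in> Md \<Longrightarrow> wf a \<Longrightarrow> wf b \<Longrightarrow> wf d \<Longrightarrow>
   EQ (subst (inst3 a b d) l) (subst (inst3 a b d) r)"
  by (rule eqderiv.ax) (use Md_sub in \<open>auto simp: inst3_def\<close>)

lemmas Md_unfold = Md_def inst3_def mPlus_def mTimes_def mNeg_def mInv_def mZero_def mOne_def Let_def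

lemma plus_assoc: "wf a \<Longrightarrow> wf b \<Longrightarrow> wf d \<Longrightarrow> EQ (mPlus (mPlus a b) d) (mPlus a (mPlus b d))"
  using Md_instance[of "mPlus (mPlus (Var 0) (Var 1)) (Var 2)" "mPlus (Var 0) (mPlus (Var 1) (Var 2))" a b d]
  by (simp add: Md_unfold)
lemma plus_comm: "wf a \<Longrightarrow> wf b \<Longrightarrow> EQ (mPlus a b) (mPlus b a)"
  using Md_instance[of "mPlus (Var 0) (Var 1)" "mPlus (Var 1) (Var 0)" a b mZero]
  by (simp add: Md_unfold)
lemma plus_zero: "wf a \<Longrightarrow> EQ (mPlus a mZero) a"
  using Md_instance[of "mPlus (Var 0) mZero" "Var 0" a mZero mZero]
  by (simp add: Md_unfold)
lemma plus_neg: "wf a \<Longrightarrow> EQ (mPlus a (mNeg a)) mZero"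
  using Md_instance[of "mPlus (Var 0) (mNeg (Var 0))" mZero a mZero mZero]
  by (simp add: Md_unfold)
lemma times_assoc: "wf a \<Longrightarrow> wf b \<Longrightarrow> wf d \<Longrightarrow> EQ (mTimes (mTimes a b) d) (mTimes a (mTimes b d))"
  using Md_instance[of "mTimes (mTimes (Var 0) (Var 1)) (Var 2)" "mTimes (Var 0) (mTimes (Var 1) (Var 2))" a b d]
  by (simp add: Md_unfold)
lemma times_comm: "wf a \<Longrightarrow> wf b \<Longrightarrow> EQ (mTimes a b) (mTimes b a)"
  using Md_instance[of "mTimes (Var 0) (Var 1)" "mTimes (Var 1) (Var 0)" a b mZero]
  by (simp add: Md_unfold)
lemma one_times: "wf a \<Longrightarrow> EQ (mTimes mOne a) a"
  using Md_instance[of "mTimes mOne (Var 0)" "Var 0" a mZero mZero]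
  by (simp add: Md_unfold)
lemma distrib: "wf a \<Longrightarrow> wf b \<Longrightarrow> wf d \<Longrightarrow> EQ (mTimes a (mPlus b d)) (mPlus (mTimes a b) (mTimes a d))"
  using Md_instance[of "mTimes (Var 0) (mPlus (Var 1) (Var 2))" "mPlus (mTimes (Var 0) (Var 1)) (mTimes (Var 0) (Var 2))" a b d]
  by (simp add: Md_unfold)
lemma times_unit: "wf a \<Longrightarrow> EQ (mTimes a (mTimes a (mInv a))) a"
  using Md_instance[of "mTimes (Var 0) (mTimes (Var 0) (mInv (Var 0)))" "Var 0" a mZero mZero]
  by (simp add: Md_unfold)

lemma times_zero: assumes "wf a" shows "EQ (mTimes a mZero) mZero"
proof -
  let ?p = "mTimes a mZero"
  have double: "EQ ?p (mPlus ?p ?p)"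
  proof -
    have "EQ ?p (mTimes a (mPlus mZero mZero))"
      by (rule times_cong[OF rfl sy[OF plus_zero]]) (use assms in simp_all)
    also have "EQ \<dots> (mPlus ?p ?p)" by (rule distrib) (use assms in simp_all)
    finally show ?thesis .
  qed
  have "EQ mZero (mPlus ?p (mNeg ?p))" by (rule sy[OF plus_neg]) (use assms in simp)
  also have "EQ \<dots> (mPlus (mPlus ?p ?p) (mNeg ?p))"
    by (rule plus_cong[OF double rfl]) (use assms in simp)
  also have "EQ \<dots> (mPlus ?p (mPlus ?p (mNeg ?p)))" by (rule plus_assoc) (use assms in simp_all)
  also have "EQ \<dots> (mPlus ?p mZero)" by (rule plus_cong[OF rfl plus_neg]) (use assms in simp_all)
  also have "EQ \<dots> ?p" by (rule plus_zero) (use assms in simp)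
  finally show ?thesis by (rule sy)
qed

lemma times_neg: assumes "wf a" "wf b" shows "EQ (mTimes a (mNeg b)) (mNeg (mTimes a b))"
proof -
  let ?q = "mTimes a (mNeg b)" and ?m = "mTimes a b"
  have "EQ ?q (mPlus ?q mZero)" by (rule sy[OF plus_zero]) (use assms in simp)
  also have "EQ \<dots> (mPlus ?q (mPlus ?m (mNeg ?m)))"
    by (rule plus_cong[OF rfl sy[OF plus_neg]]) (use assms in simp_all)
  also have "EQ \<dots> (mPlus (mPlus ?q ?m) (mNeg ?m))"
    by (rule sy[OF plus_assoc]) (use assms in simp_all)
  also have "EQ \<dots> (mPlus (mTimes a (mPlus (mNeg b) b)) (mNeg ?m))"
    by (rule plus_cong[OF sy[OF distrib] rfl]) (use assms in simp_all)
  also have "EQ \<dots> (mPlus (mTimes a (mPlus b (mNeg b))) (mNeg ?m))"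
    by (rule plus_cong[OF times_cong[OF rfl plus_comm] rfl]) (use assms in simp_all)
  also have "EQ \<dots> (mPlus (mTimes a mZero) (mNeg ?m))"
    by (rule plus_cong[OF times_cong[OF rfl plus_neg] rfl]) (use assms in simp_all)
  also have "EQ \<dots> (mPlus mZero (mNeg ?m))"
    by (rule plus_cong[OF times_zero rfl]) (use assms in simp_all)
  also have "EQ \<dots> (mPlus (mNeg ?m) mZero)" by (rule plus_comm) (use assms in simp_all)
  also have "EQ \<dots> (mNeg ?m)" by (rule plus_zero) (use assms in simp_all)
  finally show ?thesis .
qed

lemma times_one: "wf a \<Longrightarrow> EQ (mTimes a mOne) a"
  by (rule eqderiv.trans[OF times_comm one_times]) simp_all

lemma times_swap_right: "wf c \<Longrightarrow> wf a \<Longrightarrow> wf e \<Longrightarrow> EQ (mTimes c (mTimes a e)) (mTimes (mTimes c e) a)"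
  by (rule eqderiv.trans[OF times_cong[OF rfl times_comm] sy[OF times_assoc]]) simp_all

lemma times_swap_left: "wf a \<Longrightarrow> wf b \<Longrightarrow> wf y \<Longrightarrow> EQ (mTimes (mTimes a b) y) (mTimes b (mTimes a y))"
  by (rule eqderiv.trans[OF times_cong[OF times_comm rfl] times_assoc]) simp_all

lemma zero_of_annihilates: assumes "wf h" shows "EQ (mTimes (zero_of h) h) mZero"
proof -
  have "EQ (mTimes (zero_of h) h) (mTimes h (zero_of h))" by (rule times_comm) (use assms in simp_all)
  also have "EQ \<dots> (mPlus (mTimes h mOne) (mTimes h (mNeg (one_of h))))"
    unfolding zero_of_def by (rule distrib) (use assms in simp_all)
  also have "EQ \<dots> (mPlus h (mNeg (mTimes h (one_of h))))"
    by (rule plus_cong[OF times_one times_neg]) (use assms in simp_all)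
  also have "EQ \<dots> (mPlus h (mNeg h))"
    unfolding one_of_def by (rule plus_cong[OF rfl neg_cong[OF times_unit]]) (use assms in simp_all)
  also have "EQ \<dots> mZero" by (rule plus_neg) (use assms in simp_all)
  finally show ?thesis .
qed

lemma one_of_idem: assumes "wf h" shows "EQ (mTimes (one_of h) (one_of h)) (one_of h)"
proof -
  have "EQ (mTimes (one_of h) (one_of h)) (mTimes (mTimes (one_of h) h) (mInv h))"
    by (subst (2) one_of_def, rule sy[OF times_assoc]) (use assms in simp_all)
  also have "EQ \<dots> (mTimes h (mInv h))"
  proof (rule times_cong[OF _ rfl])
    have "EQ (mTimes (one_of h) h) (mTimes h (one_of h))" by (rule times_comm) (use assms in simp_all)
    also have "EQ \<dots> h" unfolding one_of_def by (rule times_unit) (use assms in simp_all)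
    finally show "EQ (mTimes (one_of h) h) h" .
  qed (use assms in simp)
  finally show ?thesis unfolding one_of_def .
qed

lemma zero_of_plus_one_of: assumes "wf h" shows "EQ (mPlus (zero_of h) (one_of h)) mOne"
proof -
  have "EQ (mPlus (zero_of h) (one_of h)) (mPlus mOne (mPlus (mNeg (one_of h)) (one_of h)))"
    unfolding zero_of_def by (rule plus_assoc) (use assms in simp_all)
  also have "EQ \<dots> (mPlus mOne (mPlus (one_of h) (mNeg (one_of h))))"
    by (rule plus_cong[OF rfl plus_comm]) (use assms in simp_all)
  also have "EQ \<dots> (mPlus mOne mZero)"
    by (rule plus_cong[OF rfl plus_neg]) (use assms in simp_all)
  also have "EQ \<dots> mOne" by (rule plus_zero) simp
  finally show ?thesis .
qed

lemma case_split_times: assumes "wf c" "wf a" "wf h"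
  shows "EQ (mTimes c a) (mPlus (mTimes (mTimes c (zero_of h)) a) (mTimes (mTimes c (one_of h)) a))"
proof -
  have "EQ (mTimes c a) (mTimes c (mTimes mOne a))"
    by (rule times_cong[OF rfl sy[OF one_times]]) (use assms in simp_all)
  also have "EQ \<dots> (mTimes c (mTimes (mPlus (zero_of h) (one_of h)) a))"
    by (rule times_cong[OF rfl times_cong[OF sy[OF zero_of_plus_one_of] rfl]]) (use assms in simp_all)
  also have "EQ \<dots> (mTimes c (mTimes a (mPlus (zero_of h) (one_of h))))"
    by (rule times_cong[OF rfl times_comm]) (use assms in simp_all)
  also have "EQ \<dots> (mTimes c (mPlus (mTimes a (zero_of h)) (mTimes a (one_of h))))"
    by (rule times_cong[OF rfl distrib]) (use assms in simp_all)
  also have "EQ \<dots> (mPlus (mTimes c (mTimes a (zero_of h))) (mTimes c (mTimes a (one_of h))))"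
    by (rule distrib) (use assms in simp_all)
  also have "EQ \<dots> (mPlus (mTimes (mTimes c (zero_of h)) a) (mTimes (mTimes c (one_of h)) a))"
    by (rule plus_cong[OF times_swap_right times_swap_right]) (use assms in simp_all)
  finally show ?thesis .
qed

lemma eq_under_times: assumes "wf e" "EQ (mTimes c l) (mTimes c r)"
  shows "EQ (mTimes (mTimes c e) l) (mTimes (mTimes c e) r)"
proof -
  have w: "wf c" "wf l" "wf r" using eqderiv_wf[OF assms(2)] by auto
  have "EQ (mTimes (mTimes c e) l) (mTimes e (mTimes c l))" by (rule times_swap_left) (use w assms in simp_all)
  also have "EQ \<dots> (mTimes e (mTimes c r))" by (rule times_cong[OF rfl assms(2)]) (use assms in simp)
  also have "EQ \<dots> (mTimes (mTimes c e) r)" by (rule sy[OF times_swap_left]) (use w assms in simp_all)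
  finally show ?thesis .
qed

text \<open>A propagating multiplier: c can be pushed into any context.  The
  propagation properties say that all pseudo units and pseudo zeros are such.\<close>
definition propagating :: "'f trm \<Rightarrow> bool" where
  "propagating c \<longleftrightarrow> (\<forall>C x. wf_ctxt F ar C \<longrightarrow> wf x \<longrightarrow>
       EQ (mTimes c (fill C x)) (mTimes c (fill C (mTimes c x))))"

lemma propagating_times:
  assumes "wf c" "wf e" "propagating c" "propagating e"
  shows "propagating (mTimes c e)"
  unfolding propagating_def
proof (intro allI impI)
  fix C x assume C: "wf_ctxt F ar C" and x: "wf x"
  note wfs = assms(1,2) C x wf_fill[OF C]
  have "EQ (mTimes (mTimes c e) (fill C x)) (mTimes c (mTimes e (fill C x)))"
    by (rule times_assoc) (use wfs in simp_all)
  also have "EQ \<dots> (mTimes c (mTimes e (fill C (mTimes e x))))"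
    by (rule times_cong[OF rfl]) (use assms(4) wfs in \<open>simp_all add: propagating_def\<close>)
  also have "EQ \<dots> (mTimes (mTimes c e) (fill C (mTimes e x)))"
    by (rule sy[OF times_assoc]) (use wfs in simp_all)
  also have "EQ \<dots> (mTimes e (mTimes c (fill C (mTimes e x))))"
    by (rule times_swap_left) (use wfs in simp_all)
  also have "EQ \<dots> (mTimes e (mTimes c (fill C (mTimes c (mTimes e x)))))"
    by (rule times_cong[OF rfl]) (use assms(3) wfs in \<open>simp_all add: propagating_def\<close>)
  also have "EQ \<dots> (mTimes (mTimes c e) (fill C (mTimes c (mTimes e x))))"
    by (rule sy[OF times_swap_left]) (use wfs in simp_all)
  also have "EQ \<dots> (mTimes (mTimes c e) (fill C (mTimes (mTimes c e) x)))"
    by (rule times_cong[OF rfl ctx_cong[OF sy[OF times_assoc] C]]) (use wfs in simp_all)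
  finally show "EQ (mTimes (mTimes c e) (fill C x)) (mTimes (mTimes c e) (fill C (mTimes (mTimes c e) x)))" .
qed

lemma propagating_ctxt:
  assumes "propagating c" "wf c" "wf_ctxt F ar C" "EQ (mTimes c a) (mTimes c b)"
  shows "EQ (mTimes c (fill C a)) (mTimes c (fill C b))"
proof -
  have wa: "wf a" and wb: "wf b" using eqderiv_wf[OF assms(4)] by auto
  have "EQ (mTimes c (fill C a)) (mTimes c (fill C (mTimes c a)))"
    using assms(1,3) wa unfolding propagating_def by blast
  also have "EQ \<dots> (mTimes c (fill C (mTimes c b)))"
    by (rule times_cong[OF rfl ctx_cong[OF assms(4,3)]]) (use assms in simp)
  also have "EQ \<dots> (mTimes c (fill C b))"
    using assms(1,3) wb unfolding propagating_def by (blast intro: sy)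
  finally show ?thesis .
qed

text \<open>Hence equality under a propagating multiplier is a congruence; the
  arguments are replaced one at a time, the first l ones being already done.\<close>
lemma propagating_args:
  assumes "propagating c" "wf c"
  shows "list_all2 (\<lambda>a b. EQ (mTimes c a) (mTimes c b)) ts us \<Longrightarrow>
    (\<forall>x\<in>set l. wf x) \<Longrightarrow> arity_ok F ar s (length l + length ts) \<Longrightarrow>
    EQ (mTimes c (Fun s (l @ ts))) (mTimes c (Fun s (l @ us)))"
proof (induction ts us arbitrary: l rule: list_all2_induct)
  case Nil
  then show ?case using assms by (intro rfl) simp
next
  case (Cons a as b bs)
  have was: "\<forall>x\<in>set as. wf x"
    using Cons(2) eqderiv_wf by (fastforce simp: list_all2_conv_all_nth in_set_conv_nth)
  have wb: "wf b" using eqderiv_wf[OF Cons(1)] by simp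
  have "EQ (mTimes c (fill (CFun s l Hole as) a)) (mTimes c (fill (CFun s l Hole as) b))"
    by (rule propagating_ctxt[OF assms _ Cons(1)]) (use Cons(4,5) was in simp)
  then have "EQ (mTimes c (Fun s (l @ a # as))) (mTimes c (Fun s ((l @ [b]) @ as)))" by simp
  also have "EQ \<dots> (mTimes c (Fun s ((l @ [b]) @ bs)))"
    by (rule Cons(3)) (use Cons(4,5) wb in auto)
  finally show ?case by simp
qed

lemma propagating_cong:
  assumes "propagating c" "wf c" "list_all2 (\<lambda>a b. EQ (mTimes c a) (mTimes c b)) ts us"
    "arity_ok F ar s (length ts)"
  shows "EQ (mTimes c (Fun s ts)) (mTimes c (Fun s us))"
  using propagating_args[OF assms(1,2,3), of "[]"] assms(4) by simp

definition guarded :: "('f trm \<times> 'f trm) set \<Rightarrow> 'f trm \<Rightarrow> bool" where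
  "guarded E' c \<longleftrightarrow> wf c \<and> propagating c \<and>
     (\<forall>(l, r) \<in> E'. (l, r) \<in> E \<or> (closed_trm l \<and> closed_trm r \<and> EQ (mTimes c l) (mTimes c r)))"

lemma guarded_base: "wf c \<Longrightarrow> propagating c \<Longrightarrow> guarded E c"
  by (auto simp: guarded_def)

lemma guarded_insert:
  "guarded E' c \<Longrightarrow> closed_trm l \<Longrightarrow> closed_trm r \<Longrightarrow> EQ (mTimes c l) (mTimes c r)
   \<Longrightarrow> guarded (insert (l, r) E') c"
  by (simp add: guarded_def)

lemma guarded_times:
  assumes "guarded E' c" "wf e" "propagating e"
  shows "guarded E' (mTimes c e)"
  using assms propagating_times[of c e] eq_under_times[of e c] unfolding guarded_def by auto

lemma zero_of_kills: assumes "wf c" "wf h"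
  shows "EQ (mTimes (mTimes c (zero_of h)) h) (mTimes (mTimes c (zero_of h)) mZero)"
proof -
  have "EQ (mTimes (mTimes c (zero_of h)) h) (mTimes c (mTimes (zero_of h) h))"
    by (rule times_assoc) (use assms in simp_all)
  also have "EQ \<dots> (mTimes c mZero)" by (rule times_cong[OF rfl zero_of_annihilates]) (use assms in simp_all)
  also have "EQ \<dots> mZero" by (rule times_zero) (use assms in simp)
  also have "EQ \<dots> (mTimes (mTimes c (zero_of h)) mZero)" by (rule sy[OF times_zero]) (use assms in simp)
  finally show ?thesis .
qed

lemma one_of_is_one: assumes "wf c" "wf h"
  shows "EQ (mTimes (mTimes c (one_of h)) (one_of h)) (mTimes (mTimes c (one_of h)) mOne)"
proof -
  have "EQ (mTimes (mTimes c (one_of h)) (one_of h)) (mTimes c (mTimes (one_of h) (one_of h)))"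
    by (rule times_assoc) (use assms in simp_all)
  also have "EQ \<dots> (mTimes c (one_of h))" by (rule times_cong[OF rfl one_of_idem]) (use assms in simp_all)
  also have "EQ \<dots> (mTimes (mTimes c (one_of h)) mOne)" by (rule sy[OF times_one]) (use assms in simp)
  finally show ?thesis .
qed

lemma guarded_zero_branch:
  assumes "prop_zeros F ar E" "guarded E' c" "wf h" "closed_trm h"
  shows "guarded (insert (h, mZero) E') (mTimes c (zero_of h))"
proof -
  have "propagating (zero_of h)" using assms(1,3) by (simp add: prop_zeros_def propagating_def)
  then show ?thesis using assms(2-4)
    by (intro guarded_insert guarded_times zero_of_kills) (auto simp: guarded_def)
qed

lemma guarded_one_branch:
  assumes "prop_units F ar E" "guarded E' c" "wf h" "closed_trm h"
  shows "guarded (insert (one_of h, mOne) E') (mTimes c (one_of h))"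
proof -
  have "propagating (one_of h)" using assms(1,3) by (simp add: prop_units_def propagating_def)
  then show ?thesis using assms(2-4)
    by (intro guarded_insert guarded_times one_of_is_one) (auto simp: guarded_def)
qed

theorem guarded_sound:
  assumes pu: "prop_units F ar E" and pz: "prop_zeros F ar E"
  shows "irderiv F ar E' a b \<Longrightarrow> guarded E' c \<Longrightarrow> EQ (mTimes c a) (mTimes c b)"
proof (induction arbitrary: c rule: irderiv.induct)
  case (ax l r E' \<sigma>)
  have wc: "wf c" using ax by (simp add: guarded_def)
  show ?case
  proof (cases "(l, r) \<in> E")
    case True
    then have "EQ (subst \<sigma> l) (subst \<sigma> r)" using ax by (intro eqderiv.ax)
    then show ?thesis by (rule times_cong[OF rfl[OF wc]])
  next
    case False
    then have "closed_trm l" "closed_trm r" "EQ (mTimes c l) (mTimes c r)"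
      using ax unfolding guarded_def by auto
    then show ?thesis by (simp add: subst_closed)
  qed
next
  case (refl t E' c)
  then show ?case by (intro rfl) (simp add: guarded_def)
next
  case (sym E' t u c)
  then show ?case by (blast intro: sy)
next
  case (trans E' t u v c)
  then show ?case by (blast intro: eqderiv.trans)
next
  case (cong s ts E' us c)
  have "list_all2 (\<lambda>a b. EQ (mTimes c a) (mTimes c b)) ts us"
    using cong(2) by (rule list_all2_mono) (use cong(3) in blast)
  then show ?case by (rule propagating_cong[rotated 2]) (use cong in \<open>simp_all add: guarded_def\<close>)
next
  case (IR h E' r s c)
  have wc: "wf c" using IR by (simp add: guarded_def)
  have zero: "EQ (mTimes (mTimes c (zero_of h)) r) (mTimes (mTimes c (zero_of h)) s)"
    using IR guarded_zero_branch[OF pz IR(7) IR(1,2)] by blast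
  have one: "EQ (mTimes (mTimes c (one_of h)) r) (mTimes (mTimes c (one_of h)) s)"
    using IR guarded_one_branch[OF pu IR(7) IR(1,2)] by blast
  have wr: "wf r" and ws: "wf s" using eqderiv_wf[OF zero] by auto
  have "EQ (mTimes c r) (mPlus (mTimes (mTimes c (zero_of h)) r) (mTimes (mTimes c (one_of h)) r))"
    by (rule case_split_times) (use wc wr IR in simp_all)
  also have "EQ \<dots> (mPlus (mTimes (mTimes c (zero_of h)) s) (mTimes (mTimes c (one_of h)) s))"
    by (rule plus_cong[OF zero one])
  also have "EQ \<dots> (mTimes c s)"
    by (rule sy[OF case_split_times]) (use wc ws IR in simp_all)
  finally show ?case .
qed

end

theorem proposition1:
  fixes F :: "'f set" and ar :: "'f \<Rightarrow> nat" and E :: "('f trm \<times> 'f trm) set"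
    and t r s :: "'f trm"
  assumes E_wf: "\<forall>(l, u) \<in> E. wf_trm F ar l \<and> wf_trm F ar u"
    and Md: "Md \<subseteq> E"
    and pu: "prop_units F ar E"
    and pz: "prop_zeros F ar E"
    and t: "wf_trm F ar t" "closed_trm t"
    and r: "wf_trm F ar r" "closed_trm r"
    and s: "wf_trm F ar s" "closed_trm s"
  shows "(irderiv F ar (insert (t, mZero) E) r s \<longrightarrow>
            eqderiv F ar E (mTimes (zero_of t) r) (mTimes (zero_of t) s))
       \<and> (irderiv F ar (insert (one_of t, mOne) E) r s \<longrightarrow>
            eqderiv F ar E (mTimes (one_of t) r) (mTimes (one_of t) s))"
proof -
  interpret meadow_theory F ar E using E_wf Md by unfold_locales
  have zero_prop: "propagating (zero_of t)" and one_prop: "propagating (one_of t)"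
    using pz pu t(1) by (simp_all add: prop_zeros_def prop_units_def propagating_def)
  have "EQ (mTimes (zero_of t) t) (mTimes (zero_of t) mZero)"
    by (rule eqderiv.trans[OF zero_of_annihilates sy[OF times_zero]]) (use t in simp_all)
  then have zero_guarded: "guarded (insert (t, mZero) E) (zero_of t)"
    using t zero_prop by (intro guarded_insert guarded_base) simp_all
  have "EQ (mTimes (one_of t) (one_of t)) (mTimes (one_of t) mOne)"
    by (rule eqderiv.trans[OF one_of_idem sy[OF times_one]]) (use t in simp_all)
  then have one_guarded: "guarded (insert (one_of t, mOne) E) (one_of t)"
    using t one_prop by (intro guarded_insert guarded_base) simp_all
  show ?thesis
    using guarded_sound[OF pu pz _ zero_guarded] guarded_sound[OF pu pz _ one_guarded] by blast
qed

end
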